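(* Let $(\Omega,\mathscr F,(\mathscr F_t)_{t\ge0},\mathbb P)$ be a complete filtered probability space satisfying the usual conditions with $\mathscr F_0$ trivial, let $S$ be a pricing kernel and $G$ a positive semimartingale with $G_0=1$ such that $SG$ is also a pricing kernel (as in the context). Suppose that both $K=S$ and $K=SG$ satisfy: (a) for each $t>0$, $\mathbb E^{\mathbb P}_t[K_T]/\mathbb E^{\mathbb P}[K_T]$ converges in $L^1(\mathbb P)$ as $T\to\infty$ to an almost surely positive $\mathscr F_t$-measurable random variable; (b) for each $t>0$, $\mathbb E^{\mathbb P}[K_{T-t}]/\mathbb E^{\mathbb P}[K_T]$ has a positive finite limit as $T\to\infty$. Let $\lambda,\pi,B^\infty,\mathbb L$ and $\pi^G,\mathbb G$ be as in the context. Suppose further that for some $t\ge0$ there are constants $0<c<C<\infty$ and $T'>0$ such that almost surely $c<\frac{\mathbb E^{\mathbb G}_t[\pi_T/\pi_T^G]}{\mathbb E^{\mathbb G}_t[1/\pi_T^G]}<C$ for all $T>T'$. Then $\lim_{T\to\infty}\rho^{\mathbb L}_{t,T}(G_T)=\lambda$, in probability under any measure locally equivalent to $\mathbb P$.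
   Context: A pricing kernel is a strictly positive semimartingale $K$ with $K_0=1$, strictly positive left-limit process $K_-$, and $\mathbb E^{\mathbb P}[K_T/K_t]<\infty$ for $T>t\ge0$. $\mathbb E_t$ is conditional expectation given $\mathscr F_t$. For a kernel $K$ satisfying (a),(b), write $P_t^{K,T}:=\mathbb E^{\mathbb P}_t[K_T/K_t]$, let $M_t^{K}$ be the $L^1$-limit in (a) (with $M_0^K=1$; it is a positive martingale), let $\lambda^K$ be the constant with $\lim_{T\to\infty}\mathbb E^{\mathbb P}[K_{T-t}]/\mathbb E^{\mathbb P}[K_T]=e^{\lambda^K t}$, and let $\pi^K_t$ be the positive limit in the semimartingale topology of $P_t^{K,T}/P_0^{K,T-t}$ as $T\to\infty$; then $K_t=e^{-\lambda^K t}M^K_t/\pi^K_t$. For $K=S$ write $\lambda,\pi,M^\infty$, put $B_t^\infty:=e^{\lambda t}\pi_t$ (the long bond) and define $\mathbb L$ by $\mathbb L|_{\mathscr F_t}=M_t^\infty\,\mathbb P|_{\mathscr F_t}$. For $K=SG$ write $\lambda^G,\pi^G,M^{G,\infty}$ and define the long forward growth measure $\mathbb G$ by $\mathbb G|_{\mathscr F_t}=M_t^{G,\infty}\,\mathbb P|_{\mathscr F_t}$. The exponential yield on $G$ under $\mathbb L$ is $\rho^{\mathbb L}_{t,T}(G_T):=\frac{1}{T-t}\log\Big(\frac{\mathbb E^{\mathbb L}_t[G_T]}{\mathbb E^{\mathbb L}_t[G_TB_t^\infty/B_T^\infty]}\Big)$. Locally equivalent means equivalent on each $\mathscr F_t$.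 *)

theory Defs
  imports "HOL-Probability.Probability"
begin

definition usual_filtered_space :: "'a measure \<Rightarrow> (real \<Rightarrow> 'a measure) \<Rightarrow> bool" where
  "usual_filtered_space P F \<longleftrightarrow>
     prob_space P \<and>
     (\<forall>t\<ge>0. subalgebra P (F t)) \<and>
     (\<forall>s t. 0 \<le> s \<longrightarrow> s \<le> t \<longrightarrow> sets (F s) \<subseteq> sets (F t)) \<and>
     (\<forall>N \<in> null_sets P. \<forall>A. A \<subseteq> N \<longrightarrow> A \<in> sets P) \<and>
     null_sets P \<subseteq> sets (F 0) \<and>
     (\<forall>t\<ge>0. sets (F t) = (\<Inter>s\<in>{t<..}. sets (F s))) \<and>
     (\<forall>A \<in> sets (F 0). measure P A = 0 \<or> measure P A = 1)"

definition adapted :: "(real \<Rightarrow> 'a measure) \<Rightarrow> (real \<Rightarrow> 'a \<Rightarrow> real) \<Rightarrow> bool" where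
  "adapted F X \<longleftrightarrow> (\<forall>t\<ge>0. X t \<in> borel_measurable (F t))"

definition cadlag :: "(real \<Rightarrow> real) \<Rightarrow> bool" where
  "cadlag f \<longleftrightarrow> (\<forall>t\<ge>0. (f \<longlongrightarrow> f t) (at_right t) \<and> (0 < t \<longrightarrow> (\<exists>l. (f \<longlongrightarrow> l) (at_left t))))"

text \<open>Elementary (simple) predictable integrands bounded by 1:
  H = h0 1_{0} + sum_{i<n} h_i 1_{(s_i, s_{i+1}]}, h_i F_{s_i}-measurable, |h_i| <= 1.\<close>
definition simple_pred :: "(real \<Rightarrow> 'a measure) \<Rightarrow> ('a \<Rightarrow> real) \<Rightarrow> nat \<Rightarrow> (nat \<Rightarrow> real)
    \<Rightarrow> (nat \<Rightarrow> 'a \<Rightarrow> real) \<Rightarrow> bool" where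
  "simple_pred F h0 n s h \<longleftrightarrow>
     h0 \<in> borel_measurable (F 0) \<and> (\<forall>\<omega>\<in>space (F 0). \<bar>h0 \<omega>\<bar> \<le> 1) \<and>
     0 \<le> s 0 \<and> (\<forall>i<n. s i \<le> s (Suc i)) \<and>
     (\<forall>i<n. h i \<in> borel_measurable (F (s i)) \<and> (\<forall>\<omega>\<in>space (F (s i)). \<bar>h i \<omega>\<bar> \<le> 1))"

definition elem_int :: "(real \<Rightarrow> 'a \<Rightarrow> real) \<Rightarrow> ('a \<Rightarrow> real) \<Rightarrow> nat \<Rightarrow> (nat \<Rightarrow> real)
    \<Rightarrow> (nat \<Rightarrow> 'a \<Rightarrow> real) \<Rightarrow> real \<Rightarrow> 'a \<Rightarrow> real" where
  "elem_int X h0 n s h t \<omega> = h0 \<omega> * X 0 \<omega> +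
     (\<Sum>i<n. h i \<omega> * (X (min (s (Suc i)) t) \<omega> - X (min (s i) t) \<omega>))"

definition bounded_in_prob :: "'a measure \<Rightarrow> ('a \<Rightarrow> real) set \<Rightarrow> bool" where
  "bounded_in_prob P Ys \<longleftrightarrow>
     (\<forall>e>0. \<exists>c. \<forall>Y\<in>Ys. measure P {\<omega>\<in>space P. c < \<bar>Y \<omega>\<bar>} \<le> e)"

text \<open>Semimartingale = adapted cadlag good integrator (Bichteler--Dellacherie):
  for each t the elementary integrals of integrands bounded by 1 are bounded in probability.\<close>
definition semimartingale :: "'a measure \<Rightarrow> (real \<Rightarrow> 'a measure) \<Rightarrow> (real \<Rightarrow> 'a \<Rightarrow> real) \<Rightarrow> bool" where
  "semimartingale P F X \<longleftrightarrow>
     adapted F X \<and> (AE \<omega> in P. cadlag (\<lambda>t. X t \<omega>)) \<and>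
     (\<forall>t\<ge>0. bounded_in_prob P {elem_int X h0 n s h t | h0 n s h. simple_pred F h0 n s h})"

definition pricing_kernel :: "'a measure \<Rightarrow> (real \<Rightarrow> 'a measure) \<Rightarrow> (real \<Rightarrow> 'a \<Rightarrow> real) \<Rightarrow> bool" where
  "pricing_kernel P F K \<longleftrightarrow>
     semimartingale P F K \<and>
     (AE \<omega> in P. \<forall>t\<ge>0. 0 < K t \<omega>) \<and>
     (AE \<omega> in P. K 0 \<omega> = 1) \<and>
     (AE \<omega> in P. \<forall>t>0. \<exists>l>0. ((\<lambda>s. K s \<omega>) \<longlongrightarrow> l) (at_left t)) \<and>
     (\<forall>t T. 0 \<le> t \<longrightarrow> t < T \<longrightarrow> integrable P (\<lambda>\<omega>. K T \<omega> / K t \<omega>))"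

definition cexp :: "'a measure \<Rightarrow> (real \<Rightarrow> 'a measure) \<Rightarrow> real \<Rightarrow> ('a \<Rightarrow> real) \<Rightarrow> 'a \<Rightarrow> real" where
  "cexp P F t X = real_cond_exp P (F t) X"

definition price :: "'a measure \<Rightarrow> (real \<Rightarrow> 'a measure) \<Rightarrow> (real \<Rightarrow> 'a \<Rightarrow> real) \<Rightarrow> real \<Rightarrow> real \<Rightarrow> 'a \<Rightarrow> real" where
  "price P F K t T = cexp P F t (\<lambda>\<omega>. K T \<omega> / K t \<omega>)"

text \<open>Conditions (a) and (b) for K, with M the L^1-limit in (a) (M_0 = 1) and lam the
  constant with lim E[K_{T-t}]/E[K_T] = exp(lam t).\<close>
definition kernel_limits :: "'a measure \<Rightarrow> (real \<Rightarrow> 'a measure) \<Rightarrow> (real \<Rightarrow> 'a \<Rightarrow> real)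
    \<Rightarrow> (real \<Rightarrow> 'a \<Rightarrow> real) \<Rightarrow> real \<Rightarrow> bool" where
  "kernel_limits P F K M lam \<longleftrightarrow>
     (\<forall>\<omega>\<in>space P. M 0 \<omega> = 1) \<and>
     (\<forall>t>0. M t \<in> borel_measurable (F t) \<and> integrable P (M t) \<and> (AE \<omega> in P. 0 < M t \<omega>) \<and>
        ((\<lambda>T. \<integral>\<omega>. \<bar>cexp P F t (K T) \<omega> / (\<integral>x. K T x \<partial>P) - M t \<omega>\<bar> \<partial>P) \<longlongrightarrow> 0) at_top) \<and>
     (\<forall>t>0. \<exists>l. 0 < l \<and> ((\<lambda>T. (\<integral>x. K (T - t) x \<partial>P) / (\<integral>x. K T x \<partial>P)) \<longlongrightarrow> l) at_top) \<and>
     (\<forall>t>0. ((\<lambda>T. (\<integral>x. K (T - t) x \<partial>P) / (\<integral>x. K T x \<partial>P)) \<longlongrightarrow> exp (lam * t)) at_top)"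

definition emery_lim :: "'a measure \<Rightarrow> (real \<Rightarrow> 'a measure) \<Rightarrow> (real \<Rightarrow> real \<Rightarrow> 'a \<Rightarrow> real)
    \<Rightarrow> (real \<Rightarrow> 'a \<Rightarrow> real) \<Rightarrow> bool" where
  "emery_lim P F X Y \<longleftrightarrow>
     (\<forall>t\<ge>0. ((\<lambda>T. Sup {\<integral>\<omega>. min 1 \<bar>elem_int (\<lambda>u \<omega>. X T u \<omega> - Y u \<omega>) h0 n s h t \<omega>\<bar> \<partial>P
                          | h0 n s h. simple_pred F h0 n s h}) \<longlongrightarrow> 0) at_top)"

definition is_pi :: "'a measure \<Rightarrow> (real \<Rightarrow> 'a measure) \<Rightarrow> (real \<Rightarrow> 'a \<Rightarrow> real)
    \<Rightarrow> (real \<Rightarrow> 'a \<Rightarrow> real) \<Rightarrow> bool" where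
  "is_pi P F K piK \<longleftrightarrow>
     (\<forall>s\<ge>0. piK s \<in> borel_measurable (F s) \<and> (AE \<omega> in P. 0 < piK s \<omega>)) \<and>
     (\<exists>Pi. (\<forall>T s. 0 \<le> s \<longrightarrow> s < T \<longrightarrow> Pi T s \<in> borel_measurable (F s) \<and>
              (AE \<omega> in P. Pi T s \<omega> = price P F K s T \<omega> / price P F K 0 (T - s) \<omega>)) \<and>
           emery_lim P F Pi piK)"

text \<open>Conditional expectation E^Q_t[X] for F_T-measurable X, where Q|F_T = M_T P|F_T.\<close>
definition cexp_dens :: "'a measure \<Rightarrow> (real \<Rightarrow> 'a measure) \<Rightarrow> (real \<Rightarrow> 'a \<Rightarrow> real) \<Rightarrow> real
    \<Rightarrow> real \<Rightarrow> ('a \<Rightarrow> real) \<Rightarrow> 'a \<Rightarrow> real" where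
  "cexp_dens P F M T t X = real_cond_exp (density P (\<lambda>\<omega>. ennreal (M T \<omega>))) (F t) X"

text \<open>Exponential yield rho^L_{t,T}(G_T), with B the long bond and L|F_T = M_T P|F_T.\<close>
definition exp_yield :: "'a measure \<Rightarrow> (real \<Rightarrow> 'a measure) \<Rightarrow> (real \<Rightarrow> 'a \<Rightarrow> real)
    \<Rightarrow> (real \<Rightarrow> 'a \<Rightarrow> real) \<Rightarrow> (real \<Rightarrow> 'a \<Rightarrow> real) \<Rightarrow> real \<Rightarrow> real \<Rightarrow> 'a \<Rightarrow> real" where
  "exp_yield P F M B G t T \<omega> =
     1 / (T - t) * ln (cexp_dens P F M T t (G T) \<omega> /
                       cexp_dens P F M T t (\<lambda>x. G T x * B t x / B T x) \<omega>)"

definition locally_equivalent :: "'a measure \<Rightarrow> (real \<Rightarrow> 'a measure) \<Rightarrow> 'a measure \<Rightarrow> bool" where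
  "locally_equivalent P F Q \<longleftrightarrow>
     prob_space Q \<and> sets Q = sets P \<and>
     (\<forall>t\<ge>0. \<forall>A\<in>sets (F t). emeasure P A = 0 \<longleftrightarrow> emeasure Q A = 0)"

end

theory Submission
  imports Defs
begin

text \<open>Each kernel factors as \<open>K\<^sub>s = exp (-\<lambda>\<^sup>K s) M\<^sup>K\<^sub>s / \<pi>\<^sup>K\<^sub>s\<close>: the price ratios
  \<open>P\<^sup>K\<^sup>,\<^sup>T\<^sub>s / P\<^sup>K\<^sup>,\<^sup>T\<^sup>-\<^sup>s\<^sub>0\<close> converge in probability to \<open>\<pi>\<^sup>K\<^sub>s\<close> (their Emery limit) and, by
  condition (a), to \<open>exp (-\<lambda>\<^sup>K s) M\<^sup>K\<^sub>s / K\<^sub>s\<close>. Inserting the factorisations of \<open>S\<close> and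
  \<open>SG\<close> into the abstract Bayes formula turns the two \<open>\<bbbL>\<close>-expectations in the yield into
  \<open>\<bbbG>\<close>-expectations, and the argument of the logarithm becomes
  \<open>exp (\<lambda> (T - t)) R\<^sub>T / \<pi>\<^sub>t\<close>, where \<open>R\<^sub>T\<close> is the ratio assumed to lie in \<open>(c, C)\<close>.
  Hence \<open>\<bar>\<rho>\<^sub>t\<^sub>,\<^sub>T - \<lambda>\<bar> \<le> (max \<bar>ln c\<bar> \<bar>ln C\<bar> + \<bar>ln \<pi>\<^sub>t\<bar>) / (T - t)\<close> almost surely, with
  a numerator that is a finite \<open>\<F>\<^sub>t\<close>-measurable random variable, so the deviation tends to
  \<open>0\<close> in probability under any measure with the same null sets in \<open>\<F>\<^sub>t\<close>.\<close>

section \<open>Conditional expectation under a change of density\<close>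

lemma sigma_finite_subalgebra_density:
  assumes "subalgebra P Fs" "integrable P D"
  shows "sigma_finite_subalgebra (density P (\<lambda>x. ennreal (D x))) Fs"
proof (rule finite_measure_subalgebra_is_sigma_finite)
  have [measurable]: "D \<in> borel_measurable P" using assms(2) by auto
  have "(\<integral>\<^sup>+x. ennreal (D x) \<partial>P) \<le> (\<integral>\<^sup>+x. ennreal (norm (D x)) \<partial>P)"
    by (intro nn_integral_mono) auto
  also have "\<dots> < \<infinity>" using assms(2) by (simp add: integrable_iff_bounded)
  finally have "finite_measure (density P (\<lambda>x. ennreal (D x)))"
    by (intro finite_measureI) (simp add: emeasure_density nn_integral_density[symmetric])
  then show "finite_measure_subalgebra (density P (\<lambda>x. ennreal (D x))) Fs"
    using assms(1) by (simp add: finite_measure_subalgebra_def finite_measure_subalgebra_axioms_def subalgebra_def)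
qed

lemma nn_cond_exp_density_mult:
  fixes D :: "'a \<Rightarrow> real" and X :: "'a \<Rightarrow> ennreal"
  assumes "sigma_finite_subalgebra P Fs" "sigma_finite_subalgebra (density P (\<lambda>x. ennreal (D x))) Fs"
    and [measurable]: "D \<in> borel_measurable P" "X \<in> borel_measurable P"
  shows "AE x in P. nn_cond_exp (density P (\<lambda>x. ennreal (D x))) Fs X x * nn_cond_exp P Fs (\<lambda>x. ennreal (D x)) x
        = nn_cond_exp P Fs (\<lambda>x. ennreal (D x) * X x) x"
proof -
  interpret sigma_finite_subalgebra P Fs by fact
  let ?N = "density P (\<lambda>x. ennreal (D x))"
  interpret N: sigma_finite_subalgebra ?N Fs by fact
  show ?thesis
  proof (rule nn_cond_exp_charact)
    fix A assume [measurable]: "A \<in> sets Fs"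
    have "(\<lambda>x. indicator A x * nn_cond_exp ?N Fs X x) \<in> borel_measurable Fs" by measurable
    then have [measurable]: "(\<lambda>x. indicator A x * nn_cond_exp ?N Fs X x) \<in> borel_measurable P"
      by (rule measurable_from_subalg[OF subalg])
    have [measurable]: "A \<in> sets P" using subalg by (auto simp: subalgebra_def)
    have "(\<integral>\<^sup>+x\<in>A. nn_cond_exp ?N Fs X x * nn_cond_exp P Fs (\<lambda>x. ennreal (D x)) x \<partial>P)
        = (\<integral>\<^sup>+x. (indicator A x * nn_cond_exp ?N Fs X x) * nn_cond_exp P Fs (\<lambda>x. ennreal (D x)) x \<partial>P)"
      by (simp add: mult.commute mult.left_commute)
    also have "\<dots> = (\<integral>\<^sup>+x. (indicator A x * nn_cond_exp ?N Fs X x) * ennreal (D x) \<partial>P)"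
      by (rule nn_cond_exp_intg) auto
    also have "\<dots> = (\<integral>\<^sup>+x. indicator A x * nn_cond_exp ?N Fs X x \<partial>?N)"
      by (subst nn_integral_density) (auto simp: mult.commute)
    also have "\<dots> = (\<integral>\<^sup>+x. indicator A x * X x \<partial>?N)"
      by (rule N.nn_cond_exp_intg) auto
    also have "\<dots> = (\<integral>\<^sup>+x\<in>A. ennreal (D x) * X x \<partial>P)"
      by (subst nn_integral_density) (auto simp: mult.commute mult.left_commute)
    finally show "(\<integral>\<^sup>+x\<in>A. ennreal (D x) * X x \<partial>P)
        = (\<integral>\<^sup>+x\<in>A. nn_cond_exp ?N Fs X x * nn_cond_exp P Fs (\<lambda>x. ennreal (D x)) x \<partial>P)"
      by simp
  qed auto
qed

lemma (in sigma_finite_subalgebra) real_cond_exp_nonneg_eq_enn2real: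
  fixes f :: "'a \<Rightarrow> real"
  assumes [measurable]: "f \<in> borel_measurable M" and "AE x in M. 0 \<le> f x"
  shows "AE x in M. real_cond_exp M F f x = enn2real (nn_cond_exp M F (\<lambda>x. ennreal (f x)) x)"
proof -
  have "AE x in M. nn_cond_exp M F (\<lambda>x. ennreal (- f x)) x = nn_cond_exp M F (\<lambda>_. 0) x"
    by (rule nn_cond_exp_cong) (use assms(2) in \<open>auto simp: ennreal_neg\<close>)
  moreover have "AE x in M. 0 = nn_cond_exp M F (\<lambda>_. 0) x"
    by (rule nn_cond_exp_charact) auto
  ultimately show ?thesis by (auto simp: real_cond_exp_def)
qed

lemma (in sigma_finite_subalgebra) nn_cond_exp_pos_finite:
  fixes D :: "'a \<Rightarrow> real"
  assumes "integrable M D" "AE x in M. 0 < D x"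
  shows "AE x in M. 0 < nn_cond_exp M F (\<lambda>x. ennreal (D x)) x \<and> nn_cond_exp M F (\<lambda>x. ennreal (D x)) x < \<infinity>"
proof -
  have [measurable]: "D \<in> borel_measurable M" using assms(1) by auto
  let ?E = "nn_cond_exp M F (\<lambda>x. ennreal (D x))"
  have "(\<integral>\<^sup>+x. 1 * ?E x \<partial>M) = (\<integral>\<^sup>+x. 1 * ennreal (D x) \<partial>M)" by (rule nn_cond_exp_intg) auto
  also have "\<dots> \<le> (\<integral>\<^sup>+x. ennreal (norm (D x)) \<partial>M)" by (intro nn_integral_mono) auto
  also have "\<dots> < \<infinity>" using assms(1) by (simp add: integrable_iff_bounded)
  finally have finite: "AE x in M. ?E x \<noteq> \<infinity>"
    by (intro nn_integral_PInf_AE) auto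
  define A where "A = {x\<in>space M. ?E x = 0}"
  have "{x\<in>space F. ?E x = 0} \<in> sets F" by measurable
  moreover have "space F = space M" using subalg by (simp add: subalgebra_def)
  ultimately have [measurable]: "A \<in> sets F" unfolding A_def by simp
  then have [measurable]: "A \<in> sets M" using subalg by (auto simp: subalgebra_def)
  have "(\<integral>\<^sup>+x. indicator A x * ennreal (D x) \<partial>M) = (\<integral>\<^sup>+x. indicator A x * ?E x \<partial>M)"
    by (rule nn_cond_exp_intg[symmetric]) auto
  also have "\<dots> = 0" by (rule nn_integral_zero') (auto simp: A_def indicator_def)
  finally have "AE x in M. indicator A x * ennreal (D x) = 0"
    by (subst nn_integral_0_iff_AE[symmetric]) auto
  then have "AE x in M. x \<notin> A"
    using assms(2) by eventually_elim (auto simp: indicator_def)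
  then have "AE x in M. ?E x \<noteq> 0" by (auto simp: A_def)
  with finite show ?thesis by eventually_elim (auto simp: top.not_eq_extremum zero_less_iff_neq_zero)
qed

lemma (in sigma_finite_subalgebra) real_cond_exp_density_mult:
  fixes D X :: "'a \<Rightarrow> real"
  assumes D: "integrable M D" "AE x in M. 0 < D x"
    and [measurable]: "X \<in> borel_measurable M" and X: "AE x in M. 0 \<le> X x"
  shows "AE x in M. real_cond_exp (density M (\<lambda>x. ennreal (D x))) F X x
      * enn2real (nn_cond_exp M F (\<lambda>x. ennreal (D x)) x)
    = enn2real (nn_cond_exp M F (\<lambda>x. ennreal (D x * X x)) x)"
proof -
  let ?N = "density M (\<lambda>x. ennreal (D x))"
  have [measurable]: "D \<in> borel_measurable M" using D(1) by auto
  have N: "sigma_finite_subalgebra ?N F"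
    by (rule sigma_finite_subalgebra_density[OF subalg D(1)])
  have "AE x in ?N. real_cond_exp ?N F X x = enn2real (nn_cond_exp ?N F (\<lambda>x. ennreal (X x)) x)"
    by (rule sigma_finite_subalgebra.real_cond_exp_nonneg_eq_enn2real[OF N])
       (use X in \<open>auto simp: AE_density\<close>)
  then have real: "AE x in M. real_cond_exp ?N F X x = enn2real (nn_cond_exp ?N F (\<lambda>x. ennreal (X x)) x)"
    using D(2) by (auto simp: AE_density elim: AE_mp)
  have bayes: "AE x in M. nn_cond_exp ?N F (\<lambda>x. ennreal (X x)) x * nn_cond_exp M F (\<lambda>x. ennreal (D x)) x
      = nn_cond_exp M F (\<lambda>x. ennreal (D x) * ennreal (X x)) x"
    by (rule nn_cond_exp_density_mult[OF sigma_finite_subalgebra_axioms N]) auto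
  have "AE x in M. nn_cond_exp M F (\<lambda>x. ennreal (D x) * ennreal (X x)) x = nn_cond_exp M F (\<lambda>x. ennreal (D x * X x)) x"
    by (rule nn_cond_exp_cong) (use D(2) X in \<open>auto simp: ennreal_mult\<close>)
  with real bayes show ?thesis
    by eventually_elim (metis enn2real_mult)
qed

lemma (in sigma_finite_subalgebra) real_cond_exp_density_change:
  fixes D1 D2 X Y k :: "'a \<Rightarrow> real"
  assumes D1: "integrable M D1" "AE x in M. 0 < D1 x" and D2: "integrable M D2" "AE x in M. 0 < D2 x"
    and X[measurable]: "X \<in> borel_measurable M" and Y[measurable]: "Y \<in> borel_measurable M"
    and [measurable]: "k \<in> borel_measurable F"
    and XY: "AE x in M. 0 \<le> X x" "AE x in M. 0 \<le> Y x" and k: "AE x in M. 0 \<le> k x"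
    and eq: "AE x in M. D1 x * X x = k x * (D2 x * Y x)"
  shows "AE x in M. real_cond_exp (density M (\<lambda>x. ennreal (D1 x))) F X x
      * enn2real (nn_cond_exp M F (\<lambda>x. ennreal (D1 x)) x)
    = k x * (real_cond_exp (density M (\<lambda>x. ennreal (D2 x))) F Y x
      * enn2real (nn_cond_exp M F (\<lambda>x. ennreal (D2 x)) x))"
proof -
  have [measurable]: "D1 \<in> borel_measurable M" "D2 \<in> borel_measurable M" using D1 D2 by auto
  have [measurable]: "k \<in> borel_measurable M" by (rule measurable_from_subalg[OF subalg]) simp
  have "AE x in M. nn_cond_exp M F (\<lambda>x. ennreal (D1 x * X x)) x
      = nn_cond_exp M F (\<lambda>x. ennreal (k x) * ennreal (D2 x * Y x)) x"
    by (rule nn_cond_exp_cong) (use eq D2(2) XY(2) k in \<open>auto simp: ennreal_mult\<close>)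
  moreover have "AE x in M. ennreal (k x) * nn_cond_exp M F (\<lambda>x. ennreal (D2 x * Y x)) x
      = nn_cond_exp M F (\<lambda>x. ennreal (k x) * ennreal (D2 x * Y x)) x"
    by (rule nn_cond_exp_prod) auto
  ultimately show ?thesis
    using real_cond_exp_density_mult[OF D1 X XY(1)] real_cond_exp_density_mult[OF D2 Y XY(2)] k
    by eventually_elim (metis enn2real_ennreal enn2real_mult)
qed

lemma (in sigma_finite_subalgebra) real_cond_exp_density_ratio:
  fixes D1 D2 X1 X2 Y1 Y2 k1 k2 :: "'a \<Rightarrow> real"
  assumes D1: "integrable M D1" "AE x in M. 0 < D1 x" and D2: "integrable M D2" "AE x in M. 0 < D2 x"
    and X: "X1 \<in> borel_measurable M" "X2 \<in> borel_measurable M"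
    and Y: "Y1 \<in> borel_measurable M" "Y2 \<in> borel_measurable M"
    and kF: "k1 \<in> borel_measurable F" "k2 \<in> borel_measurable F"
    and nonneg: "AE x in M. 0 \<le> X1 x" "AE x in M. 0 \<le> X2 x" "AE x in M. 0 \<le> Y1 x" "AE x in M. 0 \<le> Y2 x"
    and k: "AE x in M. 0 \<le> k1 x" "AE x in M. 0 \<le> k2 x"
    and eq1: "AE x in M. D1 x * X1 x = k1 x * (D2 x * Y1 x)"
    and eq2: "AE x in M. D1 x * X2 x = k2 x * (D2 x * Y2 x)"
  shows "AE x in M. real_cond_exp (density M (\<lambda>x. ennreal (D1 x))) F X1 x
      / real_cond_exp (density M (\<lambda>x. ennreal (D1 x))) F X2 x
    = k1 x / k2 x * (real_cond_exp (density M (\<lambda>x. ennreal (D2 x))) F Y1 x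
      / real_cond_exp (density M (\<lambda>x. ennreal (D2 x))) F Y2 x)"
  using real_cond_exp_density_change[OF D1 D2 X(1) Y(1) kF(1) nonneg(1,3) k(1) eq1]
    real_cond_exp_density_change[OF D1 D2 X(2) Y(2) kF(2) nonneg(2,4) k(2) eq2]
    nn_cond_exp_pos_finite[OF D1] nn_cond_exp_pos_finite[OF D2]
proof eventually_elim
  case (elim x)
  let ?d1 = "enn2real (nn_cond_exp M F (\<lambda>x. ennreal (D1 x)) x)"
  let ?d2 = "enn2real (nn_cond_exp M F (\<lambda>x. ennreal (D2 x)) x)"
  have "0 < ?d1" "0 < ?d2"
    using elim(3,4) by (auto simp: enn2real_positive_iff top.not_eq_extremum)
  then have "?d2 / ?d1 \<noteq> 0" by simp
  moreover have
    "real_cond_exp (density M (\<lambda>x. ennreal (D1 x))) F X1 x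
      = ?d2 / ?d1 * (k1 x * real_cond_exp (density M (\<lambda>x. ennreal (D2 x))) F Y1 x)"
    "real_cond_exp (density M (\<lambda>x. ennreal (D1 x))) F X2 x
      = ?d2 / ?d1 * (k2 x * real_cond_exp (density M (\<lambda>x. ennreal (D2 x))) F Y2 x)"
    using elim(1,2) \<open>0 < ?d1\<close> by (simp_all add: field_simps)
  ultimately show ?case by simp
qed



section \<open>Convergence in probability\<close>

definition prob_dist :: "'a measure \<Rightarrow> ('a \<Rightarrow> real) \<Rightarrow> ('a \<Rightarrow> real) \<Rightarrow> real" where
  "prob_dist P X Y = (\<integral>\<omega>. min 1 \<bar>X \<omega> - Y \<omega>\<bar> \<partial>P)"

lemma prob_dist_nonneg: "0 \<le> prob_dist P X Y"
  unfolding prob_dist_def by (rule integral_nonneg_AE) auto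

lemma (in prob_space) prob_dist_le_1: "prob_dist M X Y \<le> 1"
proof (cases "integrable M (\<lambda>\<omega>. min 1 \<bar>X \<omega> - Y \<omega>\<bar>)")
  case True
  then have "prob_dist M X Y \<le> (\<integral>\<omega>. 1 \<partial>M)"
    unfolding prob_dist_def by (intro integral_mono) auto
  then show ?thesis by (simp add: prob_space)
qed (simp add: prob_dist_def not_integrable_integral_eq)

lemma (in prob_space) prob_dist_triangle:
  assumes [measurable]: "X \<in> borel_measurable M" "Y \<in> borel_measurable M" "Z \<in> borel_measurable M"
  shows "prob_dist M Y Z \<le> prob_dist M X Y + prob_dist M X Z"
proof -
  have int: "integrable M (\<lambda>\<omega>. min 1 \<bar>f \<omega>\<bar>)" if [measurable]: "f \<in> borel_measurable M" for f :: "'a \<Rightarrow> real"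
    by (rule integrable_const_bound[of _ 1]) auto
  have "prob_dist M Y Z \<le> (\<integral>\<omega>. min 1 \<bar>X \<omega> - Y \<omega>\<bar> + min 1 \<bar>X \<omega> - Z \<omega>\<bar> \<partial>M)"
    unfolding prob_dist_def by (intro integral_mono int Bochner_Integration.integrable_add) auto
  also have "\<dots> = prob_dist M X Y + prob_dist M X Z"
    unfolding prob_dist_def by (intro Bochner_Integration.integral_add int) auto
  finally show ?thesis .
qed

lemma (in prob_space) AE_eq_if_prob_dist_eq_0:
  assumes [measurable]: "X \<in> borel_measurable M" "Y \<in> borel_measurable M" and "prob_dist M X Y = 0"
  shows "AE \<omega> in M. X \<omega> = Y \<omega>"
proof -
  have "integrable M (\<lambda>\<omega>. min 1 \<bar>X \<omega> - Y \<omega>\<bar>)"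
    by (rule integrable_const_bound[of _ 1]) auto
  with assms(3) have "AE \<omega> in M. min 1 \<bar>X \<omega> - Y \<omega>\<bar> = 0"
    unfolding prob_dist_def by (subst (asm) integral_nonneg_eq_0_iff_AE) auto
  then show ?thesis by eventually_elim (auto simp: min_def split: if_splits)
qed

lemma (in prob_space) prob_dist_limit_unique:
  assumes [measurable]: "Y \<in> borel_measurable M" "Z \<in> borel_measurable M"
    and "eventually (\<lambda>T. X T \<in> borel_measurable M) F" and "F \<noteq> bot"
    and Y: "((\<lambda>T. prob_dist M (X T) Y) \<longlongrightarrow> 0) F"
    and Z: "((\<lambda>T. prob_dist M (X T) Z) \<longlongrightarrow> 0) F"
  shows "AE \<omega> in M. Y \<omega> = Z \<omega>"
proof (rule AE_eq_if_prob_dist_eq_0)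
  have "eventually (\<lambda>T. prob_dist M Y Z \<le> prob_dist M (X T) Y + prob_dist M (X T) Z) F"
    using assms(3) by eventually_elim (rule prob_dist_triangle, auto)
  then have "prob_dist M Y Z \<le> 0 + 0"
    by (intro tendsto_le[OF assms(4) tendsto_add[OF Y Z] tendsto_const])
  with prob_dist_nonneg show "prob_dist M Y Z = 0"
    by (metis add_0 order_antisym)
qed auto

text \<open>Test the definition of the Emery topology against the integrand that is \<open>1\<close> on \<open>[0, s]\<close>.\<close>
lemma emery_lim_imp_prob_dist_tendsto_0:
  assumes "prob_space P" "emery_lim P F X Y" "0 \<le> s"
  shows "((\<lambda>T. prob_dist P (X T s) (Y s)) \<longlongrightarrow> 0) at_top"
proof -
  define sq where "sq = (\<lambda>i::nat. if i = 0 then 0 else s)"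
  let ?S = "\<lambda>T. {\<integral>\<omega>. min 1 \<bar>elem_int (\<lambda>u \<omega>. X T u \<omega> - Y u \<omega>) h0 n sv h s \<omega>\<bar> \<partial>P
    | h0 n sv h. simple_pred F h0 n sv h}"
  have lim: "((\<lambda>T. Sup (?S T)) \<longlongrightarrow> 0) at_top"
    using assms(2,3) unfolding emery_lim_def by blast
  have pred: "simple_pred F (\<lambda>_. 1) 1 sq (\<lambda>_ _. 1)"
    using assms(3) by (auto simp: simple_pred_def sq_def)
  have int: "elem_int (\<lambda>u \<omega>. X T u \<omega> - Y u \<omega>) (\<lambda>_. 1) 1 sq (\<lambda>_ _. 1) s \<omega> = X T s \<omega> - Y s \<omega>" for T \<omega>
    using assms(3) by (simp add: elem_int_def sq_def)
  have mem: "prob_dist P (X T s) (Y s) \<in> ?S T" for T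
    unfolding prob_dist_def using pred
    by (auto simp: int[symmetric] intro!: exI[of _ "\<lambda>_. 1"] exI[of _ "1::nat"] exI[of _ sq] exI[of _ "\<lambda>_ _. 1"])
  have "bdd_above (?S T)" for T
    using prob_space.prob_dist_le_1[OF assms(1), where Y="\<lambda>_. 0"]
    by (intro bdd_aboveI[of _ 1]) (auto simp: prob_dist_def)
  with mem have "prob_dist P (X T s) (Y s) \<le> Sup (?S T)" for T
    by (rule cSup_upper)
  then show ?thesis
    by (intro tendsto_sandwich[OF _ _ tendsto_const lim] always_eventually) (auto intro: prob_dist_nonneg)
qed

lemma (in prob_space) exists_prob_le_less:
  fixes K :: "'a \<Rightarrow> real"
  assumes [measurable]: "K \<in> borel_measurable M" and "AE x in M. 0 < K x" and "0 < e"
  shows "\<exists>d>0. prob {x\<in>space M. K x \<le> d} < e"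
proof -
  interpret D: real_distribution "distr M borel K" by (rule real_distribution_distr) simp
  have cdf: "cdf (distr M borel K) d = prob {x\<in>space M. K x \<le> d}" for d
    unfolding cdf_def by (subst measure_distr) (auto intro!: arg_cong[where f=prob])
  have "{x\<in>space M. K x \<le> 0} \<in> null_sets M"
    using assms(2) by (subst AE_iff_null_sets) (auto elim!: AE_mp)
  then have "cdf (distr M borel K) 0 = 0" by (simp add: cdf measure_eq_0_null_sets)
  moreover have "(cdf (distr M borel K) \<longlongrightarrow> cdf (distr M borel K) 0) (at_right 0)"
    using D.cdf_is_right_cont continuous_within by blast
  ultimately have "eventually (\<lambda>d. cdf (distr M borel K) d < e) (at_right 0)"
    using assms(3) by (intro order_tendstoD(2)) auto
  then obtain b where "0 < b" "\<And>d. 0 < d \<Longrightarrow> d < b \<Longrightarrow> cdf (distr M borel K) d < e"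
    by (auto simp: eventually_at_right_field)
  then have "0 < b / 2" "cdf (distr M borel K) (b / 2) < e" by auto
  then show ?thesis unfolding cdf by blast
qed

lemma (in prob_space) tendsto_prob_greater_at_top:
  fixes H :: "'a \<Rightarrow> real"
  assumes [measurable]: "H \<in> borel_measurable M"
  shows "((\<lambda>x. prob {\<omega>\<in>space M. x < H \<omega>}) \<longlongrightarrow> 0) at_top"
proof -
  interpret D: real_distribution "distr M borel H" by (rule real_distribution_distr) simp
  have "prob {\<omega>\<in>space M. x < H \<omega>} = 1 - cdf (distr M borel H) x" for x
  proof -
    have "{\<omega>\<in>space M. x < H \<omega>} = space M - {\<omega>\<in>space M. H \<omega> \<le> x}" by auto
    then have "prob {\<omega>\<in>space M. x < H \<omega>} = 1 - prob {\<omega>\<in>space M. H \<omega> \<le> x}"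
      by (simp add: prob_compl)
    moreover have "cdf (distr M borel H) x = prob {\<omega>\<in>space M. H \<omega> \<le> x}"
      unfolding cdf_def by (subst measure_distr) (auto intro!: arg_cong[where f=prob])
    ultimately show ?thesis by simp
  qed
  moreover have "((\<lambda>x. 1 - cdf (distr M borel H) x) \<longlongrightarrow> 1 - 1) at_top"
    by (intro tendsto_intros D.cdf_lim_at_top_prob)
  ultimately show ?thesis by simp
qed

text \<open>Split according to whether \<open>K \<le> d\<close>: there the integrand is at most \<open>1\<close>, elsewhere
  at most \<open>\<bar>V\<bar> / d\<close>.\<close>
lemma (in prob_space) prob_dist_divide_tendsto_0:
  fixes V :: "'b \<Rightarrow> 'a \<Rightarrow> real"
  assumes [measurable]: "K \<in> borel_measurable M" and K: "AE x in M. 0 < K x"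
    and int: "eventually (\<lambda>T. integrable M (V T)) F"
    and lim: "((\<lambda>T. \<integral>\<omega>. \<bar>V T \<omega>\<bar> \<partial>M) \<longlongrightarrow> 0) F"
  shows "((\<lambda>T. prob_dist M (\<lambda>\<omega>. V T \<omega> / K \<omega>) (\<lambda>_. 0)) \<longlongrightarrow> 0) F"
proof (rule order_tendstoI)
  fix a :: real assume "a < 0"
  then show "eventually (\<lambda>T. a < prob_dist M (\<lambda>\<omega>. V T \<omega> / K \<omega>) (\<lambda>_. 0)) F"
    using prob_dist_nonneg by (intro always_eventually) (blast intro: less_le_trans)
next
  fix e :: real assume e: "0 < e"
  obtain d where d: "0 < d" "prob {x\<in>space M. K x \<le> d} < e / 2"
    using exists_prob_le_less[OF _ K, of "e / 2"] e by auto
  have "eventually (\<lambda>T. (\<integral>\<omega>. \<bar>V T \<omega>\<bar> \<partial>M) < d * (e / 2)) F"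
    using d e by (intro order_tendstoD(2)[OF lim]) auto
  with int show "eventually (\<lambda>T. prob_dist M (\<lambda>\<omega>. V T \<omega> / K \<omega>) (\<lambda>_. 0) < e) F"
  proof eventually_elim
    case (elim T)
    have [measurable]: "V T \<in> borel_measurable M" using elim(1) by auto
    have int_V: "integrable M (\<lambda>\<omega>. \<bar>V T \<omega>\<bar> / d)" using elim(1) by auto
    have int_ind: "integrable M (\<lambda>\<omega>. indicator {x\<in>space M. K x \<le> d} \<omega> :: real)"
      by (rule integrable_const_bound[of _ 1]) auto
    have "prob_dist M (\<lambda>\<omega>. V T \<omega> / K \<omega>) (\<lambda>_. 0)
        \<le> (\<integral>\<omega>. \<bar>V T \<omega>\<bar> / d + indicator {x\<in>space M. K x \<le> d} \<omega> \<partial>M)"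
      unfolding prob_dist_def
    proof (rule integral_mono)
      show "integrable M (\<lambda>\<omega>. min 1 \<bar>V T \<omega> / K \<omega> - 0\<bar>)"
        by (rule integrable_const_bound[of _ 1]) auto
      show "integrable M (\<lambda>\<omega>. \<bar>V T \<omega>\<bar> / d + indicator {x\<in>space M. K x \<le> d} \<omega>)"
        using int_V int_ind by auto
      fix \<omega> assume \<omega>: "\<omega> \<in> space M"
      show "min 1 \<bar>V T \<omega> / K \<omega> - 0\<bar> \<le> \<bar>V T \<omega>\<bar> / d + indicator {x\<in>space M. K x \<le> d} \<omega>"
      proof (cases "K \<omega> \<le> d")
        case False
        then have "\<bar>V T \<omega> / K \<omega>\<bar> \<le> \<bar>V T \<omega>\<bar> / d"
          using d by (auto simp: abs_div intro!: divide_left_mono)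
        then show ?thesis using False by (auto simp: indicator_def)
      next
        case True
        have "0 \<le> \<bar>V T \<omega>\<bar> / d" using d by simp
        then show ?thesis using True \<omega> by (auto simp: indicator_def min_def)
      qed
    qed
    also have "\<dots> = (\<integral>\<omega>. \<bar>V T \<omega>\<bar> \<partial>M) / d + prob {x\<in>space M. K x \<le> d}"
      using int_V int_ind by simp
    also have "\<dots> < e / 2 + e / 2"
      using elim(2) d by (intro add_strict_mono) (auto simp: divide_less_eq mult.commute)
    finally show ?case by simp
  qed
qed

lemma tendsto_L1_mult:
  fixes U :: "'b \<Rightarrow> 'a \<Rightarrow> real"
  assumes X: "integrable M X" and U: "eventually (\<lambda>T. integrable M (U T)) F"
    and lim: "((\<lambda>T. \<integral>\<omega>. \<bar>U T \<omega> - X \<omega>\<bar> \<partial>M) \<longlongrightarrow> 0) F" and r: "(r \<longlongrightarrow> a) F"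
  shows "((\<lambda>T. \<integral>\<omega>. \<bar>r T * U T \<omega> - a * X \<omega>\<bar> \<partial>M) \<longlongrightarrow> 0) F"
proof (rule tendsto_sandwich[OF always_eventually _ tendsto_const])
  let ?b = "\<lambda>T. \<bar>r T\<bar> * (\<integral>\<omega>. \<bar>U T \<omega> - X \<omega>\<bar> \<partial>M) + \<bar>r T - a\<bar> * (\<integral>\<omega>. \<bar>X \<omega>\<bar> \<partial>M)"
  show "\<forall>T. 0 \<le> (\<integral>\<omega>. \<bar>r T * U T \<omega> - a * X \<omega>\<bar> \<partial>M)" by simp
  show "eventually (\<lambda>T. (\<integral>\<omega>. \<bar>r T * U T \<omega> - a * X \<omega>\<bar> \<partial>M) \<le> ?b T) F"
    using U
  proof eventually_elim
    case (elim T)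
    have int: "integrable M (\<lambda>\<omega>. \<bar>U T \<omega> - X \<omega>\<bar>)" using elim X by auto
    have "(\<integral>\<omega>. \<bar>r T * U T \<omega> - a * X \<omega>\<bar> \<partial>M)
        \<le> (\<integral>\<omega>. \<bar>r T\<bar> * \<bar>U T \<omega> - X \<omega>\<bar> + \<bar>r T - a\<bar> * \<bar>X \<omega>\<bar> \<partial>M)"
    proof (rule integral_mono)
      fix \<omega>
      have "r T * U T \<omega> - a * X \<omega> = r T * (U T \<omega> - X \<omega>) + (r T - a) * X \<omega>"
        by (simp add: algebra_simps)
      then show "\<bar>r T * U T \<omega> - a * X \<omega>\<bar> \<le> \<bar>r T\<bar> * \<bar>U T \<omega> - X \<omega>\<bar> + \<bar>r T - a\<bar> * \<bar>X \<omega>\<bar>"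
        by (metis abs_mult abs_triangle_ineq)
    qed (use elim X int in auto)
    also have "\<dots> = ?b T" using int X by simp
    finally show ?case .
  qed
  have "(?b \<longlongrightarrow> \<bar>a\<bar> * 0 + \<bar>a - a\<bar> * (\<integral>\<omega>. \<bar>X \<omega>\<bar> \<partial>M)) F"
    by (intro tendsto_intros lim r)
  then show "(?b \<longlongrightarrow> 0) F" by simp
qed

lemma (in prob_space) real_cond_exp_trivial:
  fixes f :: "'a \<Rightarrow> real"
  assumes "subalgebra M F0" and trivial: "\<forall>A\<in>sets F0. prob A = 0 \<or> prob A = 1"
    and "integrable M f"
  shows "AE x in M. real_cond_exp M F0 f x = expectation f"
proof -
  interpret finite_measure_subalgebra M F0
    using assms(1) by unfold_locales (simp add: subalgebra_def)
  show ?thesis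
  proof (rule real_cond_exp_charact)
    fix A assume A: "A \<in> sets F0"
    then have [measurable]: "A \<in> events" using subalg by (auto simp: subalgebra_def)
    from trivial A consider "prob A = 0" | "prob A = 1" by blast
    then consider "AE x in M. x \<notin> A" | "AE x in M. x \<in> A"
      by (metis AE_not_in AE_prob_1 \<open>A \<in> events\<close> measure_eq_0_null_sets null_setsI emeasure_eq_measure ennreal_0)
    then show "(\<integral>x\<in>A. f x \<partial>M) = (\<integral>x\<in>A. expectation f \<partial>M)"
    proof cases
      case 1
      have "(\<integral>x\<in>A. g x \<partial>M) = 0" for g :: "'a \<Rightarrow> real"
        unfolding set_lebesgue_integral_def
        by (rule integral_eq_zero_AE) (use 1 in \<open>auto elim!: AE_mp\<close>)
      then show ?thesis by simp
    next
      case 2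
      have "(\<integral>x\<in>A. g x \<partial>M) = (\<integral>x. g x \<partial>M)" if [measurable]: "g \<in> borel_measurable M" for g :: "'a \<Rightarrow> real"
        unfolding set_lebesgue_integral_def by (rule integral_cong_AE) (use 2 in auto)
      then show ?thesis using assms(3) by (simp add: prob_space)
    qed
  qed (use assms(3) in auto)
qed

section \<open>Pricing kernels\<close>

lemma usual_filtered_space_prob_space: "usual_filtered_space P F \<Longrightarrow> prob_space P"
  unfolding usual_filtered_space_def by (elim conjE)

lemma usual_filtered_space_subalgebra: "usual_filtered_space P F \<Longrightarrow> 0 \<le> t \<Longrightarrow> subalgebra P (F t)"
  unfolding usual_filtered_space_def by (elim conjE) simp

lemma usual_filtered_space_trivial_0:
  "usual_filtered_space P F \<Longrightarrow> \<forall>A\<in>sets (F 0). measure P A = 0 \<or> measure P A = 1"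
  unfolding usual_filtered_space_def by (elim conjE)

lemma pricing_kernel_measurable:
  assumes "usual_filtered_space P F" "pricing_kernel P F K" "0 \<le> u"
  shows "K u \<in> borel_measurable (F u)" "K u \<in> borel_measurable P"
proof -
  show *: "K u \<in> borel_measurable (F u)"
    using assms(2,3) by (simp add: pricing_kernel_def semimartingale_def adapted_def)
  show "K u \<in> borel_measurable P"
    by (rule measurable_from_subalg[OF usual_filtered_space_subalgebra[OF assms(1,3)] *])
qed

lemma pricing_kernel_pos: "pricing_kernel P F K \<Longrightarrow> 0 \<le> u \<Longrightarrow> AE \<omega> in P. 0 < K u \<omega>"
  unfolding pricing_kernel_def by (auto elim!: AE_mp)

lemma pricing_kernel_divide_initial:
  "pricing_kernel P F K \<Longrightarrow> AE \<omega> in P. K T \<omega> / K 0 \<omega> = K T \<omega>"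
  unfolding pricing_kernel_def by (auto elim!: AE_mp)

lemma pricing_kernel_integrable:
  assumes "usual_filtered_space P F" "pricing_kernel P F K" "0 < T"
  shows "integrable P (K T)"
proof -
  have "integrable P (\<lambda>\<omega>. K T \<omega> / K 0 \<omega>)"
    using assms(2,3) by (simp add: pricing_kernel_def)
  then show ?thesis
    using pricing_kernel_divide_initial[OF assms(2)] pricing_kernel_measurable[OF assms(1,2)] assms(3)
    by (subst (asm) integrable_cong_AE) auto
qed

lemma price_ratio_eq:
  assumes usual: "usual_filtered_space P F" and K: "pricing_kernel P F K" and s: "0 < s" "s < T"
  shows "AE \<omega> in P. price P F K s T \<omega> / price P F K 0 (T - s) \<omega>
    = cexp P F s (K T) \<omega> / (K s \<omega> * (\<integral>x. K (T - s) x \<partial>P))"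
proof -
  interpret prob_space P by (rule usual_filtered_space_prob_space[OF usual])
  have sub: "subalgebra P (F s)" "subalgebra P (F 0)"
    using usual_filtered_space_subalgebra[OF usual] s by auto
  interpret Fs: finite_measure_subalgebra P "F s"
    using sub(1) by unfold_locales (simp add: subalgebra_def)
  note K_meas = pricing_kernel_measurable[OF usual K]
  have [measurable]: "K s \<in> borel_measurable (F s)" "K T \<in> borel_measurable P"
    using K_meas s by auto
  have "AE \<omega> in P. real_cond_exp P (F s) (\<lambda>\<omega>. 1 / K s \<omega> * K T \<omega>) \<omega> = 1 / K s \<omega> * real_cond_exp P (F s) (K T) \<omega>"
    by (rule Fs.real_cond_exp_mult) (use K s in \<open>auto simp: pricing_kernel_def\<close>)
  then have num: "AE \<omega> in P. price P F K s T \<omega> = cexp P F s (K T) \<omega> / K s \<omega>"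
    by (simp add: price_def cexp_def)
  have "AE \<omega> in P. real_cond_exp P (F 0) (\<lambda>\<omega>. K (T - s) \<omega> / K 0 \<omega>) \<omega> = (\<integral>\<omega>. K (T - s) \<omega> / K 0 \<omega> \<partial>P)"
    by (rule real_cond_exp_trivial[OF sub(2) usual_filtered_space_trivial_0[OF usual]])
       (use K s in \<open>simp add: pricing_kernel_def\<close>)
  moreover have "(\<integral>\<omega>. K (T - s) \<omega> / K 0 \<omega> \<partial>P) = (\<integral>\<omega>. K (T - s) \<omega> \<partial>P)"
    using pricing_kernel_divide_initial[OF K] K_meas s by (intro integral_cong_AE) auto
  ultimately have den: "AE \<omega> in P. price P F K 0 (T - s) \<omega> = (\<integral>x. K (T - s) x \<partial>P)"
    by (simp add: price_def cexp_def)
  from num den show ?thesis by eventually_elim simp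
qed

lemma kernel_limits_martingale:
  assumes "kernel_limits P F K M lam" "0 < t"
  shows "M t \<in> borel_measurable (F t)" "integrable P (M t)" "AE \<omega> in P. 0 < M t \<omega>"
  using assms unfolding kernel_limits_def by (elim conjE; simp)+

lemma is_pi_pos:
  assumes "is_pi P F K piK" "0 \<le> s"
  shows "piK s \<in> borel_measurable (F s)" "AE \<omega> in P. 0 < piK s \<omega>"
  using assms unfolding is_pi_def by (elim conjE; simp)+

lemma kernel_limits_bond_price_L1:
  assumes usual: "usual_filtered_space P F" and K: "pricing_kernel P F K"
    and lim: "kernel_limits P F K M lam" and s: "0 < s"
  shows "((\<lambda>T. \<integral>\<omega>. \<bar>cexp P F s (K T) \<omega> / (\<integral>x. K (T - s) x \<partial>P) - exp (- lam * s) * M s \<omega>\<bar> \<partial>P)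
    \<longlongrightarrow> 0) at_top"
proof -
  interpret prob_space P by (rule usual_filtered_space_prob_space[OF usual])
  interpret Fs: finite_measure_subalgebra P "F s"
    using usual_filtered_space_subalgebra[OF usual] s by unfold_locales (simp_all add: subalgebra_def)
  define EK where "EK T = (\<integral>x. K T x \<partial>P)" for T
  have L1: "((\<lambda>T. \<integral>\<omega>. \<bar>cexp P F s (K T) \<omega> / EK T - M s \<omega>\<bar> \<partial>P) \<longlongrightarrow> 0) at_top"
    and rate: "((\<lambda>T. EK (T - s) / EK T) \<longlongrightarrow> exp (lam * s)) at_top"
    using lim s unfolding kernel_limits_def EK_def by (elim conjE; simp)+
  have "((\<lambda>T. inverse (EK (T - s) / EK T)) \<longlongrightarrow> inverse (exp (lam * s))) at_top"
    by (rule tendsto_inverse[OF rate]) simp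
  then have ratio: "((\<lambda>T. EK T / EK (T - s)) \<longlongrightarrow> exp (- lam * s)) at_top"
    by (simp add: exp_minus)
  have "eventually (\<lambda>T. integrable P (\<lambda>\<omega>. cexp P F s (K T) \<omega> / EK T)) at_top"
    using eventually_gt_at_top[of 0]
    by eventually_elim (auto simp: cexp_def intro!: Fs.real_cond_exp_int(1) pricing_kernel_integrable[OF usual K])
  from tendsto_L1_mult[OF kernel_limits_martingale(2)[OF lim s] this L1 ratio]
  have "((\<lambda>T. \<integral>\<omega>. \<bar>EK T / EK (T - s) * (cexp P F s (K T) \<omega> / EK T) - exp (- lam * s) * M s \<omega>\<bar> \<partial>P)
    \<longlongrightarrow> 0) at_top" .
  moreover have "eventually (\<lambda>T. EK T \<noteq> 0) at_top"
    using order_tendstoD(1)[OF rate exp_gt_zero] by eventually_elim auto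
  ultimately show ?thesis
    by (elim tendsto_cong[THEN iffD1, rotated]) (auto simp: EK_def elim!: eventually_mono)
qed

text \<open>The price ratios \<open>Pi T s\<close> have two limits in probability: \<open>piK s\<close> by the Emery
  convergence, and \<open>exp (- lam * s) * M s / K s\<close> by \<open>kernel_limits_bond_price_L1\<close>.\<close>
lemma pricing_kernel_decomposition:
  assumes usual: "usual_filtered_space P F" and K: "pricing_kernel P F K"
    and lim: "kernel_limits P F K M lam" and pi: "is_pi P F K piK" and s: "0 < s"
  shows "AE \<omega> in P. piK s \<omega> = exp (- lam * s) * M s \<omega> / K s \<omega>"
proof -
  interpret prob_space P by (rule usual_filtered_space_prob_space[OF usual])
  have sub: "subalgebra P (F s)" using usual_filtered_space_subalgebra[OF usual] s by simp
  obtain Pi where Pi: "\<And>T u. 0 \<le> u \<Longrightarrow> u < T \<Longrightarrow> Pi T u \<in> borel_measurable (F u) \<and>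
      (AE \<omega> in P. Pi T u \<omega> = price P F K u T \<omega> / price P F K 0 (T - u) \<omega>)"
    and emery: "emery_lim P F Pi piK"
    using pi unfolding is_pi_def by blast
  have [measurable]: "K s \<in> borel_measurable P"
    using pricing_kernel_measurable(2)[OF usual K] s by simp
  have [measurable]: "M s \<in> borel_measurable P"
    by (rule measurable_from_subalg[OF sub kernel_limits_martingale(1)[OF lim s]])
  have [measurable]: "piK s \<in> borel_measurable P"
    using s by (intro measurable_from_subalg[OF sub is_pi_pos(1)[OF pi]]) simp
  define V where "V T \<omega> = cexp P F s (K T) \<omega> / (\<integral>x. K (T - s) x \<partial>P) - exp (- lam * s) * M s \<omega>" for T \<omega>
  define Z where "Z \<omega> = exp (- lam * s) * M s \<omega> / K s \<omega>" for \<omega>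
  have [measurable]: "Z \<in> borel_measurable P" unfolding Z_def[abs_def] by measurable
  interpret Fs: finite_measure_subalgebra P "F s"
    using sub by unfold_locales (simp add: subalgebra_def)
  have int: "eventually (\<lambda>T. integrable P (V T)) at_top"
    using eventually_gt_at_top[of 0]
  proof eventually_elim
    case (elim T)
    have "integrable P (cexp P F s (K T))"
      unfolding cexp_def by (rule Fs.real_cond_exp_int(1)[OF pricing_kernel_integrable[OF usual K elim]])
    then show ?case using kernel_limits_martingale(2)[OF lim s] unfolding V_def[abs_def] by auto
  qed
  have L1: "((\<lambda>T. \<integral>\<omega>. \<bar>V T \<omega>\<bar> \<partial>P) \<longlongrightarrow> 0) at_top"
    unfolding V_def by (rule kernel_limits_bond_price_L1[OF usual K lim s])
  have "AE \<omega> in P. 0 < K s \<omega>" using pricing_kernel_pos[OF K] s by simp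
  from prob_dist_divide_tendsto_0[OF _ this int L1]
  have V: "((\<lambda>T. prob_dist P (\<lambda>\<omega>. V T \<omega> / K s \<omega>) (\<lambda>_. 0)) \<longlongrightarrow> 0) at_top"
    by simp
  have "eventually (\<lambda>T. prob_dist P (\<lambda>\<omega>. V T \<omega> / K s \<omega>) (\<lambda>_. 0) = prob_dist P (Pi T s) Z) at_top"
    using eventually_gt_at_top[of s]
  proof eventually_elim
    case (elim T)
    have [measurable]: "Pi T s \<in> borel_measurable P"
      using Pi[of s T] elim s measurable_from_subalg[OF sub] by auto
    have "AE \<omega> in P. Pi T s \<omega> - Z \<omega> = V T \<omega> / K s \<omega> - 0"
      using Pi[of s T] price_ratio_eq[OF usual K s elim] elim s
      by (auto simp: V_def Z_def diff_divide_distrib elim!: AE_mp)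
    then show ?case
      unfolding prob_dist_def by (intro integral_cong_AE) (auto simp: V_def cexp_def elim!: AE_mp)
  qed
  with V have "((\<lambda>T. prob_dist P (Pi T s) Z) \<longlongrightarrow> 0) at_top"
    by (simp add: tendsto_cong)
  moreover have "((\<lambda>T. prob_dist P (Pi T s) (piK s)) \<longlongrightarrow> 0) at_top"
    by (rule emery_lim_imp_prob_dist_tendsto_0[OF prob_space_axioms emery]) (use s in simp)
  moreover have "eventually (\<lambda>T. Pi T s \<in> borel_measurable P) at_top"
    using eventually_gt_at_top[of s] by eventually_elim (use Pi[of s] s measurable_from_subalg[OF sub] in auto)
  ultimately have "AE \<omega> in P. piK s \<omega> = Z \<omega>"
    by (intro prob_dist_limit_unique) auto
  then show ?thesis by (simp add: Z_def)
qed

section \<open>The exponential yield\<close>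

text \<open>By the decompositions of \<open>S\<close> and \<open>SG\<close>, the \<open>\<bbbL>\<close>-densities \<open>M T * G T\<close> and
  \<open>M T * G T * B t / B T\<close> equal the \<open>\<bbbG>\<close>-densities \<open>MG T * piS T / piG T\<close> and
  \<open>MG T / piG T\<close> times \<open>exp ((lam - lamG) * T)\<close> and \<open>exp (lam * t) * piS t * exp (- lamG * T)\<close>,
  both of which are \<open>\<F>\<^sub>t\<close>-measurable.\<close>
lemma exp_yield_long_bond_eq:
  assumes usual: "usual_filtered_space P F"
    and S: "pricing_kernel P F S" and G: "semimartingale P F G"
    and G_pos: "AE \<omega> in P. \<forall>u\<ge>0. 0 < G u \<omega>"
    and SG: "pricing_kernel P F (\<lambda>u \<omega>. S u \<omega> * G u \<omega>)"
    and S_lim: "kernel_limits P F S M lam"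
    and SG_lim: "kernel_limits P F (\<lambda>u \<omega>. S u \<omega> * G u \<omega>) MG lamG"
    and S_pi: "is_pi P F S piS" and SG_pi: "is_pi P F (\<lambda>u \<omega>. S u \<omega> * G u \<omega>) piG"
    and t: "0 \<le> t" "t < T"
  shows "AE \<omega> in P. exp_yield P F M (\<lambda>u \<omega>. exp (lam * u) * piS u \<omega>) G t T \<omega>
    = 1 / (T - t) * ln (exp (lam * (T - t)) / piS t \<omega>
      * (cexp_dens P F MG T t (\<lambda>x. piS T x / piG T x) \<omega> / cexp_dens P F MG T t (\<lambda>x. 1 / piG T x) \<omega>))"
proof -
  have T: "0 < T" using t by simp
  have sub: "subalgebra P (F t)" "subalgebra P (F T)"
    using usual_filtered_space_subalgebra[OF usual] t by auto
  interpret prob_space P by (rule usual_filtered_space_prob_space[OF usual])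
  interpret Ft: finite_measure_subalgebra P "F t"
    using sub(1) by unfold_locales (simp add: subalgebra_def)
  note from_T = measurable_from_subalg[OF sub(2)]
  have [measurable]: "M T \<in> borel_measurable P" "MG T \<in> borel_measurable P"
    "piS T \<in> borel_measurable P" "piG T \<in> borel_measurable P"
    using from_T[OF kernel_limits_martingale(1)[OF S_lim T]] from_T[OF kernel_limits_martingale(1)[OF SG_lim T]]
      from_T[OF is_pi_pos(1)[OF S_pi]] from_T[OF is_pi_pos(1)[OF SG_pi]] T by auto
  have "G T \<in> borel_measurable (F T)" using G T by (simp add: semimartingale_def adapted_def)
  then have [measurable]: "G T \<in> borel_measurable P" by (rule from_T)
  have [measurable]: "piS t \<in> borel_measurable (F t)" using is_pi_pos(1)[OF S_pi t(1)] .
  then have [measurable]: "piS t \<in> borel_measurable P" by (rule measurable_from_subalg[OF sub(1)])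
  have pos: "AE \<omega> in P. 0 < M T \<omega> \<and> 0 < MG T \<omega> \<and> 0 < piS T \<omega> \<and> 0 < piG T \<omega>
      \<and> 0 < S T \<omega> \<and> 0 < G T \<omega> \<and> 0 < piS t \<omega>"
    using kernel_limits_martingale(3)[OF S_lim T] kernel_limits_martingale(3)[OF SG_lim T]
      is_pi_pos(2)[OF S_pi] is_pi_pos(2)[OF SG_pi] pricing_kernel_pos[OF S] G_pos t
    by (auto elim!: AE_mp)
  have dec: "AE \<omega> in P. piS T \<omega> = exp (- lam * T) * M T \<omega> / S T \<omega>
      \<and> piG T \<omega> = exp (- lamG * T) * MG T \<omega> / (S T \<omega> * G T \<omega>)"
    using pricing_kernel_decomposition[OF usual S S_lim S_pi T]
      pricing_kernel_decomposition[OF usual SG SG_lim SG_pi T] by (auto elim!: AE_mp)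
  define k1 where "k1 = exp ((lam - lamG) * T)"
  define k2 where "k2 \<omega> = exp (lam * t) * piS t \<omega> * exp (- lamG * T)" for \<omega>
  have "AE \<omega> in P. real_cond_exp (density P (\<lambda>x. ennreal (M T x))) (F t) (G T) \<omega>
      / real_cond_exp (density P (\<lambda>x. ennreal (M T x))) (F t) (\<lambda>x. G T x * (exp (lam * t) * piS t x) / (exp (lam * T) * piS T x)) \<omega>
    = k1 / k2 \<omega> * (real_cond_exp (density P (\<lambda>x. ennreal (MG T x))) (F t) (\<lambda>x. piS T x / piG T x) \<omega>
      / real_cond_exp (density P (\<lambda>x. ennreal (MG T x))) (F t) (\<lambda>x. 1 / piG T x) \<omega>)"
  proof (rule Ft.real_cond_exp_density_ratio)
    have "AE x in P. M T x * G T x = k1 * (MG T x * (piS T x / piG T x))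
      \<and> M T x * (G T x * (exp (lam * t) * piS t x) / (exp (lam * T) * piS T x))
        = k2 x * (MG T x * (1 / piG T x))"
      using pos dec
    proof eventually_elim
      case (elim x)
      then have p: "0 < S T x" "0 < G T x" "0 < piS T x" "0 < piG T x" by auto
      with elim(2) have "M T x = exp (lam * T) * S T x * piS T x"
        "MG T x = exp (lamG * T) * S T x * G T x * piG T x"
        by (simp_all add: field_simps exp_minus)
      with p show ?case by (simp add: k1_def k2_def exp_diff left_diff_distrib exp_minus field_simps)
    qed
    then show "AE x in P. M T x * G T x = k1 * (MG T x * (piS T x / piG T x))"
      "AE x in P. M T x * (G T x * (exp (lam * t) * piS t x) / (exp (lam * T) * piS T x))
        = k2 x * (MG T x * (1 / piG T x))"
      by (auto elim!: AE_mp)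
  qed (use kernel_limits_martingale[OF S_lim T] kernel_limits_martingale[OF SG_lim T] pos in
    \<open>auto simp: k1_def k2_def elim!: AE_mp\<close>)
  moreover have "k1 / k2 \<omega> = exp (lam * (T - t)) / piS t \<omega>" for \<omega>
    by (simp add: k1_def k2_def exp_diff exp_minus right_diff_distrib left_diff_distrib)
  ultimately show ?thesis
    by (simp only:) (erule AE_mp, intro AE_I2 impI, simp only: exp_yield_def cexp_dens_def)
qed

lemma yield_deviation_le:
  fixes R p c C lam t T :: real
  assumes "t < T" "0 < c" "c < R" "R < C" "0 < p"
  shows "\<bar>1 / (T - t) * ln (exp (lam * (T - t)) / p * R) - lam\<bar> \<le> (max \<bar>ln c\<bar> \<bar>ln C\<bar> + \<bar>ln p\<bar>) / (T - t)"
proof -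
  have "ln (exp (lam * (T - t)) / p * R) = lam * (T - t) + ln R - ln p"
    using assms by (simp add: ln_mult ln_div)
  then have "1 / (T - t) * ln (exp (lam * (T - t)) / p * R) - lam = (ln R - ln p) / (T - t)"
    using assms(1) by (simp add: field_simps)
  moreover have "ln c < ln R" "ln R < ln C" using assms by simp_all
  then have "\<bar>ln R - ln p\<bar> \<le> max \<bar>ln c\<bar> \<bar>ln C\<bar> + \<bar>ln p\<bar>" by linarith
  ultimately show ?thesis using assms(1) by (simp add: abs_div divide_right_mono)
qed

lemma exp_yield_deviation_le:
  assumes usual: "usual_filtered_space P F"
    and S: "pricing_kernel P F S" and G: "semimartingale P F G"
    and G_pos: "AE \<omega> in P. \<forall>u\<ge>0. 0 < G u \<omega>"
    and SG: "pricing_kernel P F (\<lambda>u \<omega>. S u \<omega> * G u \<omega>)"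
    and S_lim: "kernel_limits P F S M lam"
    and SG_lim: "kernel_limits P F (\<lambda>u \<omega>. S u \<omega> * G u \<omega>) MG lamG"
    and S_pi: "is_pi P F S piS" and SG_pi: "is_pi P F (\<lambda>u \<omega>. S u \<omega> * G u \<omega>) piG"
    and t: "0 \<le> t" "t < T" and c: "0 < c"
    and bound: "AE \<omega> in P.
        c < cexp_dens P F MG T t (\<lambda>x. piS T x / piG T x) \<omega> / cexp_dens P F MG T t (\<lambda>x. 1 / piG T x) \<omega>
      \<and> cexp_dens P F MG T t (\<lambda>x. piS T x / piG T x) \<omega> / cexp_dens P F MG T t (\<lambda>x. 1 / piG T x) \<omega> < C"
  shows "AE \<omega> in P. \<bar>exp_yield P F M (\<lambda>u \<omega>. exp (lam * u) * piS u \<omega>) G t T \<omega> - lam\<bar>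
    \<le> (max \<bar>ln c\<bar> \<bar>ln C\<bar> + \<bar>ln (piS t \<omega>)\<bar>) / (T - t)"
  using exp_yield_long_bond_eq[OF usual S G G_pos SG S_lim SG_lim S_pi SG_pi t] bound
    is_pi_pos(2)[OF S_pi t(1)]
proof eventually_elim
  case (elim \<omega>)
  show ?case
    unfolding elim(1) by (rule yield_deviation_le[OF t(2) c _ _ elim(3)]) (use elim(2) in auto)
qed

lemma AE_locally_equivalent:
  assumes "locally_equivalent P F Q" "0 \<le> s" "subalgebra P (F s)"
    and "Measurable.pred (F s) Pr" and "AE x in P. Pr x"
  shows "AE x in Q. Pr x"
proof -
  have sets: "sets Q = sets P" using assms(1) by (simp add: locally_equivalent_def)
  have "{x\<in>space (F s). \<not> Pr x} \<in> sets (F s)" using assms(4) by measurable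
  then have N: "{x\<in>space P. \<not> Pr x} \<in> sets (F s)" using assms(3) by (simp add: subalgebra_def)
  then have "{x\<in>space P. \<not> Pr x} \<in> sets P" using assms(3) by (auto simp: subalgebra_def)
  moreover have "emeasure P {x\<in>space P. \<not> Pr x} = 0"
    using assms(5) \<open>{x\<in>space P. \<not> Pr x} \<in> sets P\<close> by (simp add: AE_iff_measurable)
  then have "emeasure Q {x\<in>space P. \<not> Pr x} = 0"
    using assms(1,2) N by (simp add: locally_equivalent_def)
  ultimately show ?thesis
    using sets sets_eq_imp_space_eq[OF sets] by (subst AE_iff_measurable) auto
qed

lemma (in prob_space) tendsto_prob_deviation_0:
  fixes Y :: "'b \<Rightarrow> 'a \<Rightarrow> real" and H :: "'a \<Rightarrow> real"
  assumes [measurable]: "H \<in> borel_measurable M"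
    and bound: "eventually (\<lambda>T. AE \<omega> in M. \<bar>Y T \<omega> - l\<bar> \<le> H \<omega> / r T) F"
    and r: "filterlim r at_top F" and e: "0 < e"
  shows "((\<lambda>T. prob {\<omega>\<in>space M. e < \<bar>Y T \<omega> - l\<bar>}) \<longlongrightarrow> 0) F"
proof (rule tendsto_sandwich[OF always_eventually _ tendsto_const])
  have "filterlim (\<lambda>T. e * r T) at_top F"
    by (rule filterlim_tendsto_pos_mult_at_top[OF tendsto_const e r])
  then show "((\<lambda>T. prob {\<omega>\<in>space M. e * r T < H \<omega>}) \<longlongrightarrow> 0) F"
    by (rule filterlim_compose[OF tendsto_prob_greater_at_top[OF assms(1)]])
  show "eventually (\<lambda>T. prob {\<omega>\<in>space M. e < \<bar>Y T \<omega> - l\<bar>} \<le> prob {\<omega>\<in>space M. e * r T < H \<omega>}) F"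
    using bound r[unfolded filterlim_at_top_dense, rule_format, of 0]
  proof eventually_elim
    case (elim T)
    show ?case
    proof (rule finite_measure_mono_AE)
      show "AE \<omega> in M. \<omega> \<in> {\<omega>\<in>space M. e < \<bar>Y T \<omega> - l\<bar>} \<longrightarrow> \<omega> \<in> {\<omega>\<in>space M. e * r T < H \<omega>}"
        using elim(1) by eventually_elim
          (use elim(2) in \<open>auto simp: pos_le_divide_eq intro: less_le_trans[OF mult_strict_right_mono]\<close>)
    qed measurable
  qed
qed simp

theorem theorem3p5:
  fixes P :: "'a measure" and F :: "real \<Rightarrow> 'a measure"
    and S G M MG piS piG :: "real \<Rightarrow> 'a \<Rightarrow> real"
    and lam lamG t c C T' :: real and Q :: "'a measure"
  assumes usual: "usual_filtered_space P F"
    and S_kernel: "pricing_kernel P F S"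
    and G_semimart: "semimartingale P F G"
    and G_pos: "AE \<omega> in P. \<forall>u\<ge>0. 0 < G u \<omega>"
    and G_0: "AE \<omega> in P. G 0 \<omega> = 1"
    and SG_kernel: "pricing_kernel P F (\<lambda>u \<omega>. S u \<omega> * G u \<omega>)"
    and S_lim: "kernel_limits P F S M lam"
    and SG_lim: "kernel_limits P F (\<lambda>u \<omega>. S u \<omega> * G u \<omega>) MG lamG"
    and S_pi: "is_pi P F S piS"
    and SG_pi: "is_pi P F (\<lambda>u \<omega>. S u \<omega> * G u \<omega>) piG"
    and t_nonneg: "0 \<le> t"
    and c_pos: "0 < c" and c_C: "c < C" and T'_pos: "0 < T'"
    and bound: "\<forall>T>T'. AE \<omega> in P.
        c < cexp_dens P F MG T t (\<lambda>x. piS T x / piG T x) \<omega> / cexp_dens P F MG T t (\<lambda>x. 1 / piG T x) \<omega>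
      \<and> cexp_dens P F MG T t (\<lambda>x. piS T x / piG T x) \<omega> / cexp_dens P F MG T t (\<lambda>x. 1 / piG T x) \<omega> < C"
    and Q_equiv: "locally_equivalent P F Q"
  shows "\<forall>e>0. ((\<lambda>T. measure Q {\<omega>\<in>space Q.
            e < \<bar>exp_yield P F M (\<lambda>u \<omega>. exp (lam * u) * piS u \<omega>) G t T \<omega> - lam\<bar>}) \<longlongrightarrow> 0) at_top"
proof (intro allI impI)
  fix e :: real assume e: "0 < e"
  interpret Q: prob_space Q using Q_equiv by (simp add: locally_equivalent_def)
  have sub: "subalgebra P (F t)" by (rule usual_filtered_space_subalgebra[OF usual t_nonneg])
  have [measurable]: "piS t \<in> borel_measurable (F t)" by (rule is_pi_pos(1)[OF S_pi t_nonneg])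
  define Y where "Y = exp_yield P F M (\<lambda>u \<omega>. exp (lam * u) * piS u \<omega>) G t"
  define H where "H \<omega> = max \<bar>ln c\<bar> \<bar>ln C\<bar> + \<bar>ln (piS t \<omega>)\<bar>" for \<omega>
  have [measurable]: "Y T \<in> borel_measurable (F t)" for T
    unfolding Y_def exp_yield_def cexp_dens_def by measurable
  have [measurable]: "H \<in> borel_measurable (F t)" unfolding H_def[abs_def] by measurable
  have deviation: "AE \<omega> in P. \<bar>Y T \<omega> - lam\<bar> \<le> H \<omega> / (T - t)" if "max T' t < T" for T
    using exp_yield_deviation_le[OF usual S_kernel G_semimart G_pos SG_kernel S_lim SG_lim S_pi SG_pi
        t_nonneg _ c_pos bound[rule_format]] that
    by (simp add: Y_def H_def)
  then have deviation_Q: "eventually (\<lambda>T. AE \<omega> in Q. \<bar>Y T \<omega> - lam\<bar> \<le> H \<omega> / (T - t)) at_top"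
    using eventually_gt_at_top[of "max T' t"]
    by (auto intro!: AE_locally_equivalent[OF Q_equiv t_nonneg sub] elim!: eventually_mono)
  have "H \<in> borel_measurable P" by (rule measurable_from_subalg[OF sub]) measurable
  then have H: "H \<in> borel_measurable Q"
    using Q_equiv by (simp add: locally_equivalent_def cong: measurable_cong_sets)
  have "filterlim (\<lambda>T. T - t) at_top at_top"
    using filterlim_tendsto_add_at_top[OF tendsto_const filterlim_ident, of "- t"] by simp
  from Q.tendsto_prob_deviation_0[OF H deviation_Q this e]
  show "((\<lambda>T. measure Q {\<omega>\<in>space Q. e < \<bar>exp_yield P F M (\<lambda>u \<omega>. exp (lam * u) * piS u \<omega>) G t T \<omega> - lam\<bar>})
      \<longlongrightarrow> 0) at_top"
    by (simp add: Y_def)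
qed

end
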